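(* The PBW basis of the commutative operad $\operatorname{Com}$ obtained (by taking the elements represented by increasing chains) from the CL-labelling of the partition posets which labels the edge between $(A_1,\dots,A_p)$ and the partition obtained by merging $A_i$ and $A_j$ by $\max(\min A_i,\min A_j)$ is the basis consisting of the binary left combs whose leaves are labelled from left to right by $1,\dots,n$.
   Context: $\operatorname{Com}$ is the operad of commutative associative algebras, generated by one symmetric binary operation $\mu$; its operadic partition posets are the posets of set partitions of $\{1,\dots,n\}$ ordered by refinement. The maximal chains of these posets correspond to levelled binary trees (one merge per level), and the associated PBW basis consists of the elements of $\operatorname{Com}$ (written as shuffle trees in $\mu$) represented by the unique strictly increasing (lexicographically minimal) maximal chains for the labelling. A binary left comb is the tree $(\cdots((x_1\mu x_2)\mu x_3)\cdots)\mu x_n$. *)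

theory Defs
  imports Main
begin

text \<open>Binary trees in the single symmetric generator mu of Com; leaves are labelled by
  elements of {1..n}.\<close>
datatype tree = Leaf nat | Mu tree tree

text \<open>Shuffle-tree convention: the subtree containing the smaller minimal leaf is put on
  the left. Composing the trees f A and f B of two blocks A, B.\<close>
definition shuffle_mu :: "(nat set \<Rightarrow> tree) \<Rightarrow> nat set \<Rightarrow> nat set \<Rightarrow> tree" where
  "shuffle_mu f A B = (if Min A < Min B then Mu (f A) (f B) else Mu (f B) (f A))"

definition merge :: "nat set set \<Rightarrow> nat set \<Rightarrow> nat set \<Rightarrow> nat set set" where
  "merge P A B = (P - {A, B}) \<union> {A \<union> B}"

definition edge_label :: "nat set \<Rightarrow> nat set \<Rightarrow> nat" where
  "edge_label A B = max (Min A) (Min B)"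

text \<open>run P f w Q g: a saturated chain in the partition poset from P to Q (each step merges
  two distinct blocks, i.e. is a cover relation), whose sequence of edge labels is w;
  f assigns to each block of P its tree, and g the trees of the blocks of Q obtained by
  grafting along the chain (one merge per level).\<close>
inductive run :: "nat set set \<Rightarrow> (nat set \<Rightarrow> tree) \<Rightarrow> nat list \<Rightarrow> nat set set \<Rightarrow> (nat set \<Rightarrow> tree) \<Rightarrow> bool" where
  run_nil: "run P f [] P f"
| run_step: "\<lbrakk> A \<in> P; B \<in> P; A \<noteq> B;
     run (merge P A B) (f (A \<union> B := shuffle_mu f A B)) w Q g \<rbrakk>
   \<Longrightarrow> run P f (edge_label A B # w) Q g"

definition bot_part :: "nat \<Rightarrow> nat set set" where
  "bot_part n = (\<lambda>i. {i}) ` {1..n}"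

definition top_part :: "nat \<Rightarrow> nat set set" where
  "top_part n = {{1..n}}"

definition leaves :: "nat set \<Rightarrow> tree" where
  "leaves A = Leaf (Min A)"

definition pbw_basis :: "nat \<Rightarrow> tree set" where
  "pbw_basis n = {g {1..n} | w g. run (bot_part n) leaves w (top_part n) g \<and> sorted_wrt (<) w}"

definition left_comb :: "nat \<Rightarrow> tree" where
  "left_comb n = foldl (\<lambda>t i. Mu t (Leaf i)) (Leaf 1) [2..<n+1]"

end

theory Submission
  imports Defs
begin

(* Merging two blocks removes the label max (min A) (min B) from the set of block minima, and
   minima of distinct blocks stay distinct. Hence the labels of any maximal chain from the
   discrete partition of {1..n} to the one-block partition are 2, ..., n, each exactly once, and
   an increasing chain has labels 2, 3, ..., n in this order. At the partition
   {1..k}, {k+1}, ..., {n} the only pair of blocks with label k+1 is {1..k}, {k+1}; so the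
   increasing chain exists, is unique, and its k-th step grafts the leaf k+1 to the right of the
   comb built so far. *)

lemma Min_atLeastAtMost: "a \<le> b \<Longrightarrow> Min {a..b} = (a::nat)"
  by (intro Min_eqI) auto

lemma merge_doubleton_eq: "{A, B} = {C, D} \<Longrightarrow> merge P A B = merge P C D"
  by (auto simp: merge_def doubleton_eq_iff)

lemma Min_merge:
  assumes "A \<in> P" "B \<in> P" "A \<noteq> B" "\<forall>X\<in>P. finite X \<and> X \<noteq> {}" "inj_on Min P"
  shows "Min ` merge P A B = Min ` P - {edge_label A B}"
proof -
  have "Min ` merge P A B = insert (min (Min A) (Min B)) (Min ` (P - {A, B}))"
    using assms(1,2,4) by (simp add: merge_def Min_Un)
  also have "Min ` (P - {A, B}) = Min ` P - {Min A, Min B}"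
    using assms(1,2,5) by (simp add: inj_on_image_set_diff)
  also have "insert (min (Min A) (Min B)) (Min ` P - {Min A, Min B}) = Min ` P - {edge_label A B}"
  proof -
    have "Min A \<noteq> Min B"
      using assms(1,2,3,5) by (auto dest: inj_onD)
    then show ?thesis
      using assms(1,2) unfolding edge_label_def by (auto simp: min_def max_def)
  qed
  finally show ?thesis .
qed

lemma inj_on_Min_merge:
  assumes "A \<in> P" "B \<in> P" "\<forall>X\<in>P. finite X \<and> X \<noteq> {}" "inj_on Min P"
  shows "inj_on Min (merge P A B)"
proof -
  have "Min (A \<union> B) \<in> {Min A, Min B}"
    using assms(1-3) by (simp add: Min_Un min_def)
  then have "Min (A \<union> B) \<notin> Min ` (P - {A, B})"
    using assms(1,2,4) by (auto dest: inj_onD)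
  moreover have "inj_on Min (P - {A, B})"
    using assms(4) by (rule inj_on_subset) blast
  ultimately show ?thesis
    unfolding merge_def by (auto simp: inj_on_Un)
qed

lemma run_Min_image:
  assumes "run P f w Q g" "\<forall>X\<in>P. finite X \<and> X \<noteq> {}" "inj_on Min P"
  shows "set w \<subseteq> Min ` P \<and> Min ` Q = Min ` P - set w"
  using assms
proof (induction rule: run.induct)
  case (run_nil P f)
  then show ?case by simp
next
  case (run_step A P B f w Q g)
  have "\<forall>X\<in>merge P A B. finite X \<and> X \<noteq> {}"
    using run_step.hyps(1,2) run_step.prems(1) by (auto simp: merge_def)
  then have "set w \<subseteq> Min ` merge P A B \<and> Min ` Q = Min ` merge P A B - set w"
    using run_step.IH run_step.hyps(1,2) run_step.prems inj_on_Min_merge by blast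
  moreover have "edge_label A B \<in> Min ` P"
    using run_step.hyps(1,2) by (auto simp: edge_label_def max_def)
  ultimately show ?case
    using Min_merge[OF run_step.hyps(1-3) run_step.prems] by auto
qed

lemma run_bot_top_labels:
  assumes "run (bot_part n) f w (top_part n) g" "1 \<le> n"
  shows "set w = {2..n}"
proof -
  have "\<forall>X\<in>bot_part n. finite X \<and> X \<noteq> {}" "inj_on Min (bot_part n)"
    by (auto simp: bot_part_def inj_on_def)
  moreover have "Min {1..n} = 1"
    using assms(2) by (rule Min_atLeastAtMost)
  ultimately have "set w \<subseteq> {1..n}" "{1} = {1..n} - set w"
    using run_Min_image[OF assms(1)] by (simp_all add: bot_part_def top_part_def image_image)
  then have "set w = {1..n} - {1}"
    by blast
  also have "\<dots> = {2..n}"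
    by auto
  finally show ?thesis .
qed

lemma sorted_run_bot_top_labels:
  assumes "run (bot_part n) f w (top_part n) g" "sorted_wrt (<) w" "1 \<le> n"
  shows "w = [2..<Suc n]"
proof (rule sorted_distinct_set_unique)
  show "sorted w" "distinct w"
    using assms(2) by (simp_all add: strict_sorted_iff)
  show "set w = set [2..<Suc n]"
    using run_bot_top_labels[OF assms(1,3)] by (metis atLeastLessThanSuc_atLeastAtMost set_upt)
  show "sorted [2..<Suc n]" "distinct [2..<Suc n]"
    by (rule sorted_upt distinct_upt)+
qed

definition comb_partition :: "nat \<Rightarrow> nat \<Rightarrow> nat set set" where
  "comb_partition k n = insert {1..k} ((\<lambda>i. {i}) ` {k<..n})"

lemma bot_part_eq_comb_partition: "1 \<le> n \<Longrightarrow> bot_part n = comb_partition 1 n"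
  by (auto simp: bot_part_def comb_partition_def)

lemma comb_partition_last: "comb_partition n n = top_part n"
  by (simp add: comb_partition_def top_part_def)

lemma comb_partitionE:
  assumes "X \<in> comb_partition k n"
  obtains "X = {1..k}" | i where "X = {i}" "k < i" "i \<le> n"
  using assms unfolding comb_partition_def by auto

lemma comb_partition_label_Suc:
  assumes "A \<in> comb_partition k n" "B \<in> comb_partition k n" "A \<noteq> B"
    and "edge_label A B = Suc k" "1 \<le> k"
  shows "{A, B} = {{1..k}, {Suc k}}"
proof -
  have "Min {1..k} = 1"
    using assms(5) by (rule Min_atLeastAtMost)
  with assms show ?thesis
    by (elim comb_partitionE) (auto simp: edge_label_def)
qed

lemma merge_comb_partition:
  "merge (comb_partition k n) {1..k} {Suc k} = comb_partition (Suc k) n"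
proof -
  have "{1..k} \<notin> (\<lambda>i. {i}) ` {k<..n}"
    by auto
  then have "comb_partition k n - {{1..k}, {Suc k}} = (\<lambda>i. {i}) ` {k<..n} - {{Suc k}}"
    unfolding comb_partition_def by blast
  also have "\<dots> = (\<lambda>i. {i}) ` {Suc k<..n}"
    by auto
  finally show ?thesis
    by (simp add: merge_def comb_partition_def atLeastAtMostSuc_conv)
qed

lemma left_comb_Suc: "1 \<le> k \<Longrightarrow> left_comb (Suc k) = Mu (left_comb k) (Leaf (Suc k))"
  by (simp add: left_comb_def)

lemma shuffle_mu_left_comb:
  assumes "{A, B} = {{1..k}, {Suc k}}" "1 \<le> k"
    and "f {1..k} = left_comb k" "f {Suc k} = Leaf (Suc k)"
  shows "shuffle_mu f A B = left_comb (Suc k)"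
proof -
  have "Min {1..k} = 1"
    using assms(2) by (rule Min_atLeastAtMost)
  with assms show ?thesis
    by (auto simp: doubleton_eq_iff shuffle_mu_def left_comb_Suc)
qed

lemma run_comb_partition_left_comb:
  assumes "run P f w Q g" "P = comb_partition k n" "w = [Suc k..<Suc n]" "1 \<le> k" "k \<le> n"
    and "f {1..k} = left_comb k" "\<forall>i\<in>{k<..n}. f {i} = Leaf i"
  shows "g {1..n} = left_comb n"
  using assms
proof (induction arbitrary: k rule: run.induct)
  case (run_nil P f)
  from run_nil.prems(2) have "[Suc k..<Suc n] = []"
    by (rule sym)
  with run_nil.prems(4) have "k = n"
    by (simp del: upt_Suc)
  with run_nil show ?case
    by simp
next
  case (run_step A P B f w Q g)
  from run_step.prems(2) have "[Suc k..<Suc n] = edge_label A B # w"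
    by (rule sym)
  then have "k < n" and label: "edge_label A B = Suc k" and w: "w = [Suc (Suc k)..<Suc n]"
    unfolding upt_eq_Cons_conv by auto
  have AB: "{A, B} = {{1..k}, {Suc k}}"
    using run_step.hyps(1-3) label run_step.prems(3) unfolding run_step.prems(1)
    by (rule comb_partition_label_Suc)
  have union: "A \<union> B = {1..Suc k}"
    using arg_cong[OF AB, of Union] by (simp add: atLeastAtMostSuc_conv)
  have merge: "merge P A B = comb_partition (Suc k) n"
    unfolding run_step.prems(1) merge_doubleton_eq[OF AB] by (rule merge_comb_partition)
  have "f {Suc k} = Leaf (Suc k)"
    using run_step.prems(6) \<open>k < n\<close> by simp
  with AB run_step.prems(3,5) have shuffle: "shuffle_mu f A B = left_comb (Suc k)"
    by (rule shuffle_mu_left_comb)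
  show ?case
  proof (rule run_step.IH[OF merge w])
    show "(f(A \<union> B := shuffle_mu f A B)) {1..Suc k} = left_comb (Suc k)"
      using union shuffle by simp
    show "\<forall>i\<in>{Suc k<..n}. (f(A \<union> B := shuffle_mu f A B)) {i} = Leaf i"
      using union run_step.prems(6) by (auto simp: eq_commute[of "{_}"])
  qed (use \<open>k < n\<close> in auto)
qed

lemma ex_run_comb_partition:
  assumes "k \<le> n" "1 \<le> k"
  shows "\<exists>g. run (comb_partition k n) f [Suc k..<Suc n] (top_part n) g"
  using assms
proof (induction k arbitrary: f rule: inc_induct)
  case base
  have "run (top_part n) f [] (top_part n) f"
    by (rule run_nil)
  then show ?case
    by (auto simp: comb_partition_last)
next
  case (step m)
  have "1 \<le> m"
    using step.hyps(1) step.prems by simp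
  then have label: "edge_label {1..m} {Suc m} = Suc m"
    by (simp add: edge_label_def Min_atLeastAtMost)
  have blocks: "{1..m} \<in> comb_partition m n" "{Suc m} \<in> comb_partition m n" "{1..m} \<noteq> {Suc m}"
    using step.hyps(2) by (auto simp: comb_partition_def)
  obtain g where "run (comb_partition (Suc m) n) (f({1..m} \<union> {Suc m} := shuffle_mu f {1..m} {Suc m}))
      [Suc (Suc m)..<Suc n] (top_part n) g"
    using step.IH by auto
  then have "run (comb_partition m n) f (edge_label {1..m} {Suc m} # [Suc (Suc m)..<Suc n]) (top_part n) g"
    by (intro run_step[OF blocks]) (simp only: merge_comb_partition)
  moreover have "[Suc m..<Suc n] = Suc m # [Suc (Suc m)..<Suc n]"
    using step.hyps(2) by (simp add: upt_conv_Cons del: upt_Suc)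
  ultimately show ?case
    using label by auto
qed

lemma run_bot_part_left_comb:
  assumes "run (bot_part n) leaves [2..<Suc n] (top_part n) g" "1 \<le> n"
  shows "g {1..n} = left_comb n"
proof (rule run_comb_partition_left_comb[OF assms(1)])
  show "bot_part n = comb_partition 1 n"
    using assms(2) by (rule bot_part_eq_comb_partition)
  show "[2..<Suc n] = [Suc 1..<Suc n]"
    by (simp add: numeral_2_eq_2 del: upt_Suc)
  show "leaves {1..1} = left_comb 1" "\<forall>i\<in>{1<..n}. leaves {i} = Leaf i"
    by (simp_all add: leaves_def left_comb_def)
qed (use assms(2) in simp_all)

lemma ex_run_bot_part:
  assumes "1 \<le> n"
  shows "\<exists>g. run (bot_part n) leaves [2..<Suc n] (top_part n) g"
  using ex_run_comb_partition[OF assms order_refl] bot_part_eq_comb_partition[OF assms]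
  by (simp add: numeral_2_eq_2 del: upt_Suc)

theorem mainTheorem5:
  fixes n :: nat
  assumes "n \<ge> 1"
  shows "pbw_basis n = {left_comb n}"
proof -
  have "t \<in> pbw_basis n \<longleftrightarrow> t = left_comb n" for t
  proof
    assume "t \<in> pbw_basis n"
    then obtain w g where "t = g {1..n}" "run (bot_part n) leaves w (top_part n) g" "sorted_wrt (<) w"
      unfolding pbw_basis_def by blast
    with assms show "t = left_comb n"
      by (metis sorted_run_bot_top_labels run_bot_part_left_comb)
  next
    assume "t = left_comb n"
    moreover obtain g where "run (bot_part n) leaves [2..<Suc n] (top_part n) g"
      using ex_run_bot_part[OF assms] by blast
    ultimately show "t \<in> pbw_basis n"
      unfolding pbw_basis_def using run_bot_part_left_comb[OF _ assms] sorted_wrt_upt by fastforce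
  qed
  then show ?thesis
    by blast
qed

end
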